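(* Let $N\ge 2$, let $\rho_1,\dots,\rho_N$ be two-qubit density operators, $\rho_k$ acting on qubits $((k-1)_2,k_1)$, and let $\rho_{\mathrm{in}}=\bigotimes_{k=1}^N\rho_k$. Let $\mathcal P$ be any swap-and-correct protocol for the chain, with induced non-postselected swapping channel $\Lambda_{\mathcal P}$, and let $\mathcal B_{[N]}(\rho_{\mathrm{in}})=\bigotimes_{k=1}^N\mathcal B(\rho_k)$ (each $\mathcal B$ acting on the two qubits of $\rho_k$). Then $$\mathcal B\big(\Lambda_{\mathcal P}(\rho_{\mathrm{in}})\big)=\Lambda_{\mathcal P}\big(\mathcal B_{[N]}(\rho_{\mathrm{in}})\big)=\Lambda_{\mathrm{seq}}\big(\mathcal B_{[N]}(\rho_{\mathrm{in}})\big),$$ where $\mathcal B$ on the left acts on the output qubits $(0_2,N_1)$ and $\mathrm{seq}$ is the sequential swapping protocol. In particular this quantity does not depend on $\mathcal P$.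
   Context: Bell states: $|\Psi_{mn}\rangle=(I_2\otimes X^mZ^n)\tfrac{1}{\sqrt2}(|00\rangle+|11\rangle)$, $m,n\in\{0,1\}$, with $X,Y,Z$ the Pauli matrices. Bell-diagonal twirl of a two-qubit state: $\mathcal B(\rho)=\tfrac14\sum_{P\in\{I,X,Y,Z\}}(P\otimes P)\rho(P\otimes P)^\dagger$; it equals $\sum_{m,n}\langle\Psi_{mn}|\rho|\Psi_{mn}\rangle\,|\Psi_{mn}\rangle\langle\Psi_{mn}|$. Let $A=\{I,X,Z,XZ\}$. Repeater chain: nodes $0,1,\dots,N$; end node $0$ holds qubit $0_2$, end node $N$ holds qubit $N_1$, each repeater node $k\in\{1,\dots,N-1\}$ holds qubits $k_1,k_2$. A syndrome is $\vec s=(s_1,\dots,s_{N-1})\in A^{N-1}$, where $s_k=X^mZ^n$ records that the Bell-state measurement (BSM) at node $k$ on $(k_1,k_2)$ projected onto $|\Psi_{mn}\rangle_{k_1k_2}$; write $|\Psi_{s_k}\rangle$ for this state. A swap-and-correct protocol is a map $\mathcal P:A^{N-1}\to A^{N+1}$, $\vec s\mapsto(\mathcal P_0(\vec s),\dots,\mathcal P_N(\vec s))$, with $\mathcal P_k(\vec s)$ the Pauli correction applied at node $k$ (for repeater nodes, to qubit $k_1$, before its BSM), such that (A) there is a permutation $\alpha$ of $\{1,\dots,N-1\}$ (the order of the BSMs) such that for each $k$, $\mathcal P_{\alpha(k)}(\vec s)$ depends only on $s_{\alpha(1)},\dots,s_{\alpha(k-1)}$; and (B) for every syndrome $\vec s$,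 the normalised output obtained from $|\Psi_{00}\rangle\langle\Psi_{00}|^{\otimes N}$ is $|\Psi_{00}\rangle\langle\Psi_{00}|$ on $(0_2,N_1)$. For a syndrome $\vec s$ define $\Lambda_{\mathcal P,\vec s}(\rho)=\mathrm{Tr}_{\text{repeater qubits}}\big[\big(\bigotimes_{k=1}^{N-1}|\Psi_{s_k}\rangle\langle\Psi_{s_k}|_{k_1k_2}\big)C_{\vec s}\rho C_{\vec s}^\dagger\big]$, where $C_{\vec s}$ applies $\mathcal P_0(\vec s)$ to $0_2$, $\mathcal P_N(\vec s)$ to $N_1$ and $\mathcal P_k(\vec s)$ to $k_1$ for $1\le k\le N-1$; the non-postselected swapping channel is $\Lambda_{\mathcal P}=\sum_{\vec s\in A^{N-1}}\Lambda_{\mathcal P,\vec s}$, with output on qubits $(0_2,N_1)$. The sequential protocol $\mathrm{seq}$ has $\mathcal P_0(\vec s)=\mathcal P_1(\vec s)=I$ and $\mathcal P_k(\vec s)=s_{k-1}$ for $k=2,\dots,N$. *)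

theory Defs
  imports Complex_Main "HOL-Library.FuncSet"
begin

text \<open>Computational basis states of a register of qubits labelled by natural numbers are
 assignments nat => bool.  An operator on such a register is its matrix
 (x,y) |-> <x|A|y>.  Two-qubit operators are indexed by bool x bool (first, second qubit),
 one-qubit operators by bool.\<close>

type_synonym qop = "(nat \<Rightarrow> bool) \<Rightarrow> (nat \<Rightarrow> bool) \<Rightarrow> complex"
type_synonym qop2 = "bool \<times> bool \<Rightarrow> bool \<times> bool \<Rightarrow> complex"
type_synonym qop1 = "bool \<Rightarrow> bool \<Rightarrow> complex"

definition bas :: "nat set \<Rightarrow> (nat \<Rightarrow> bool) set" where
  "bas Q = {f. \<forall>i. i \<notin> Q \<longrightarrow> \<not> f i}"

definition fmult :: "nat \<Rightarrow> qop \<Rightarrow> qop \<Rightarrow> qop" where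
  "fmult n A B = (\<lambda>x y. \<Sum>z\<in>bas {..<n}. A x z * B z y)"

definition fadj :: "qop \<Rightarrow> qop" where
  "fadj A = (\<lambda>x y. cnj (A y x))"

definition mult2 :: "qop2 \<Rightarrow> qop2 \<Rightarrow> qop2" where
  "mult2 A B = (\<lambda>u w. \<Sum>v\<in>UNIV. A u v * B v w)"

definition adj2 :: "qop2 \<Rightarrow> qop2" where
  "adj2 A = (\<lambda>u w. cnj (A w u))"

definition kron1 :: "qop1 \<Rightarrow> qop1 \<Rightarrow> qop2" where
  "kron1 U V = (\<lambda>u w. U (fst u) (fst w) * V (snd u) (snd w))"

definition tr2 :: "qop2 \<Rightarrow> complex" where
  "tr2 M = (\<Sum>u\<in>UNIV. M u u)"

definition density2 :: "qop2 \<Rightarrow> bool" where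
  "density2 M \<longleftrightarrow> (\<forall>u w. M u w = cnj (M w u))
     \<and> (\<forall>v::bool\<times>bool \<Rightarrow> complex. Im (\<Sum>u\<in>UNIV. \<Sum>w\<in>UNIV. cnj (v u) * M u w * v w) = 0
                                 \<and> Re (\<Sum>u\<in>UNIV. \<Sum>w\<in>UNIV. cnj (v u) * M u w * v w) \<ge> 0)
     \<and> tr2 M = 1"

definition pI :: qop1 where "pI = (\<lambda>a b. if a = b then 1 else 0)"
definition pX :: qop1 where "pX = (\<lambda>a b. if a \<noteq> b then 1 else 0)"
definition pY :: qop1 where
  "pY = (\<lambda>a b. if a = b then 0 else if a then \<i> else - \<i>)"
definition pZ :: qop1 where "pZ = (\<lambda>a b. if a = b then (if a then -1 else 1) else 0)"

text \<open>The element X^m Z^n of A = {I,X,Z,XZ}, encoded by (m,n).\<close>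
definition pauli :: "bool \<times> bool \<Rightarrow> qop1" where
  "pauli s = (\<lambda>x y. if x = (y \<noteq> fst s) then (if snd s \<and> y then -1 else 1) else 0)"

text \<open>|Psi_mn> = (I (x) X^m Z^n)(|00>+|11>)/sqrt 2; amplitude at |a b>.\<close>
definition bell :: "bool \<times> bool \<Rightarrow> bool \<times> bool \<Rightarrow> complex" where
  "bell s u = pauli s (snd u) (fst u) / complex_of_real (sqrt 2)"

definition bellproj :: "bool \<times> bool \<Rightarrow> qop2" where
  "bellproj s = (\<lambda>u w. bell s u * cnj (bell s w))"

definition twirl :: "qop2 \<Rightarrow> qop2" where
  "twirl \<rho> = (\<lambda>u w. (1/4) * (\<Sum>P\<leftarrow>[pI, pX, pY, pZ].
                 mult2 (mult2 (kron1 P P) \<rho>) (adj2 (kron1 P P)) u w))"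

text \<open>Qubit labelling of the chain on register {..<2N}: (k-1)_2 = 2k-2, k_1 = 2k-1.
 So 0_2 = 0, N_1 = 2N-1, repeater node k holds k_1 = 2k-1 and k_2 = 2k, and
 rho_k acts on the pair (2k-2, 2k-1).\<close>

definition chain_in :: "nat \<Rightarrow> (nat \<Rightarrow> qop2) \<Rightarrow> qop" where
  "chain_in N \<rho> = (\<lambda>x y. \<Prod>k\<in>{1..N}.
      \<rho> k (x (2*k-2), x (2*k-1)) (y (2*k-2), y (2*k-1)))"

definition syndromes :: "nat \<Rightarrow> (nat \<Rightarrow> bool \<times> bool) set" where
  "syndromes N = PiE {1..N-1} (\<lambda>_. UNIV)"

text \<open>A protocol maps a syndrome to the corrections at nodes 0..N.\<close>
type_synonym protocol = "(nat \<Rightarrow> bool \<times> bool) \<Rightarrow> nat \<Rightarrow> bool \<times> bool"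

definition corr_gate :: "protocol \<Rightarrow> (nat \<Rightarrow> bool \<times> bool) \<Rightarrow> nat \<Rightarrow> qop1" where
  "corr_gate P s q = (if q = 0 then pauli (P s 0)
                      else if odd q then pauli (P s ((q + 1) div 2))
                      else pI)"

definition corr_op :: "nat \<Rightarrow> protocol \<Rightarrow> (nat \<Rightarrow> bool \<times> bool) \<Rightarrow> qop" where
  "corr_op N P s = (\<lambda>x y. \<Prod>q<2*N. corr_gate P s q (x q) (y q))"

definition bsm_proj :: "nat \<Rightarrow> (nat \<Rightarrow> bool \<times> bool) \<Rightarrow> qop" where
  "bsm_proj N s = (\<lambda>x y.
      (\<Prod>k\<in>{1..N-1}. bellproj (s k) (x (2*k-1), x (2*k)) (y (2*k-1), y (2*k)))
      * (if x 0 = y 0 \<and> x (2*N-1) = y (2*N-1) then 1 else 0))"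

text \<open>Lambda_{P,s}(rho) = Tr_rep[ Pi_s C_s rho C_s^dagger ], output on (0_2, N_1).\<close>
definition Lambda_s :: "nat \<Rightarrow> protocol \<Rightarrow> (nat \<Rightarrow> bool \<times> bool) \<Rightarrow> qop \<Rightarrow> qop2" where
  "Lambda_s N P s \<rho> =
     (let C = corr_op N P s;
          M = fmult (2*N) (bsm_proj N s) (fmult (2*N) (fmult (2*N) C \<rho>) (fadj C))
      in (\<lambda>u w. \<Sum>r\<in>bas {1..2*N-2}.
             M (r(0 := fst u, 2*N-1 := snd u)) (r(0 := fst w, 2*N-1 := snd w))))"

definition Lambda :: "nat \<Rightarrow> protocol \<Rightarrow> qop \<Rightarrow> qop2" where
  "Lambda N P \<rho> = (\<lambda>u w. \<Sum>s\<in>syndromes N. Lambda_s N P s \<rho> u w)"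

definition is_protocol :: "nat \<Rightarrow> protocol \<Rightarrow> bool" where
  "is_protocol N P \<longleftrightarrow>
     (\<exists>\<alpha>. bij_betw \<alpha> {1..N-1} {1..N-1} \<and>
        (\<forall>k\<in>{1..N-1}. \<forall>s\<in>syndromes N. \<forall>s'\<in>syndromes N.
            (\<forall>j\<in>{1..<k}. s (\<alpha> j) = s' (\<alpha> j)) \<longrightarrow> P s (\<alpha> k) = P s' (\<alpha> k)))
   \<and> (\<forall>s\<in>syndromes N.
        let out = Lambda_s N P s (chain_in N (\<lambda>_. bellproj (False, False)))
        in tr2 out \<noteq> 0 \<and> (\<lambda>u w. out u w / tr2 out) = bellproj (False, False))"

definition seq_prot :: "nat \<Rightarrow> protocol" where
  "seq_prot N = (\<lambda>s k. if 2 \<le> k \<and> k \<le> N then s (k - 1) else (False, False))"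

end

(* Expand every link state in the Bell basis.  The amplitude of a product of Bell states
   Psi_(alpha 1) ... Psi_(alpha N) under the corrections and the BSM outcome s is a product of
   2 x 2 matrices, each a signed Pauli operator, so the output is +-2^(1-N) times a Bell state
   on the end qubits.  Its label is alpha 1 + ... + alpha N plus a residual depending only on
   P and s, which condition (B) forces to vanish (and which vanishes for seq).  Hence
   Lambda_P(rho_in) is a sum over s, alpha, beta of
   4^(1-N) c(alpha, beta) e_s(alpha) e_s(beta) |Psi_(sum alpha)><Psi_(sum beta)|.

   Twirling the links keeps only alpha = beta, where e_s(alpha)^2 = 1 and the average over s
   is 1, so the result does not depend on P.  Twirling the output keeps only
   sum alpha = sum beta; if alpha and beta still differ, some partial sum of alpha - beta is
   nonzero at a repeater.  Flipping the outcome of the last such BSM in the protocol's order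
   by a Pauli anticommuting with that partial sum negates e_s(alpha) e_s(beta), because the
   corrections entering this sign are chosen before that BSM; so these terms cancel. *)

theory Submission
  imports Defs "HOL-Library.Product_Plus"
begin

section \<open>Pauli labels in Z/2\<close>

(* Exclusive or makes bool the group Z/2; through Product_Plus the labels bool \<times> bool
   of A = {I, X, Z, XZ} become Z/2 \<times> Z/2, the Pauli group modulo signs. *)
instantiation bool :: comm_monoid_add
begin
definition zero_bool_def: "0 = False"
definition plus_bool_def: "a + b \<longleftrightarrow> a \<noteq> (b::bool)"
instance by standard (auto simp: zero_bool_def plus_bool_def)
end

lemmas xor_defs = zero_bool_def plus_bool_def

lemma add_False_bool [simp]: "b + False = b" "False + b = b"
  by (simp_all add: plus_bool_def)

lemma add_self_label [simp]: "(g :: bool \<times> bool) + g = 0"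
  by (simp add: prod_eq_iff xor_defs)

lemma add_label_cancel [simp]: "(g :: bool \<times> bool) + h + h = g"
  by (simp add: add.assoc)

lemma add_label_eq_0_iff: "(g :: bool \<times> bool) + h = 0 \<longleftrightarrow> g = h"
  by (auto simp: prod_eq_iff xor_defs)

lemma zero_label: "(False, False) = (0 :: bool \<times> bool)"
  by (simp add: zero_prod_def zero_bool_def)

lemma UNIV_label: "(UNIV :: (bool \<times> bool) set) = {(False, False), (False, True), (True, False), (True, True)}"
  by auto

lemma sum_UNIV_label:
  "(\<Sum>a\<in>UNIV. f a) = f (False, False) + f (False, True) + f (True, False) + (f (True, True) :: complex)"
  by (subst UNIV_label) (simp add: add.assoc)

section \<open>Signed Pauli operators\<close>

(* SPauli b (m, n) stands for (-1)^b X^m Z^n; the product picks up the sign (-1)^(n m')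
   from Z^n X^m' = (-1)^(n m') X^m' Z^n. *)
datatype spauli = SPauli (neg: bool) (lbl: "bool \<times> bool")

instantiation spauli :: monoid_mult
begin
definition one_spauli_def: "1 = SPauli 0 0"
definition times_spauli_def:
  "a * b = SPauli (neg a + neg b + (snd (lbl a) \<and> fst (lbl b))) (lbl a + lbl b)"
instance
  by standard (auto simp: xor_defs times_spauli_def one_spauli_def spauli.expand prod_eq_iff)
end

lemma lbl_times [simp]: "lbl (a * b) = lbl a + lbl b"
  and neg_one [simp]: "neg 1 = 0" and lbl_one [simp]: "lbl 1 = 0"
  by (simp_all add: xor_defs times_spauli_def one_spauli_def)

definition spinv :: "spauli \<Rightarrow> spauli" where
  "spinv t = SPauli (neg t + (fst (lbl t) \<and> snd (lbl t))) (lbl t)"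

lemma lbl_spinv [simp]: "lbl (spinv t) = lbl t"
  by (simp add: spinv_def)

lemma spinv_times: "spinv (a * b) = spinv b * spinv a"
  by (auto simp: xor_defs spinv_def times_spauli_def prod_eq_iff)

definition anticomm :: "bool \<times> bool \<Rightarrow> bool \<times> bool \<Rightarrow> bool" where
  "anticomm g h \<longleftrightarrow> (fst g \<and> snd h) \<noteq> (snd g \<and> fst h)"

lemma anticomm_zero [simp]: "anticomm g 0 = False" "anticomm 0 g = False"
  by (simp_all add: xor_defs anticomm_def)

lemma anticomm_add_left: "anticomm (g + g') h = anticomm g h + anticomm g' h"
  by (auto simp: xor_defs anticomm_def)

lemma anticomm_witness:
  assumes "h \<noteq> 0"
  shows "\<exists>g. anticomm g h"
proof
  show "anticomm (snd h, fst h \<and> \<not> snd h) h"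
    using assms by (auto simp: xor_defs anticomm_def prod_eq_iff)
qed

definition negate_if :: "bool \<Rightarrow> spauli \<Rightarrow> spauli" where
  "negate_if b t = SPauli (neg t + b) (lbl t)"

lemma negate_if_times [simp]:
  "negate_if b x * y = negate_if b (x * y)" "x * negate_if b y = negate_if b (x * y)"
  by (auto simp: xor_defs negate_if_def times_spauli_def)

lemma negate_if_zero [simp]: "negate_if 0 t = t"
  by (simp add: xor_defs negate_if_def)

lemma negate_if_negate_if [simp]: "negate_if a (negate_if b x) = negate_if (a + b) x"
  by (auto simp: xor_defs negate_if_def)

lemma spinv_conj: "spinv u * v * u = negate_if (anticomm (lbl u) (lbl v)) v"
  by (auto simp: xor_defs spinv_def times_spauli_def negate_if_def anticomm_def spauli.expand prod_eq_iff)

(* Two words that differ only in their middle factors: moving the running difference of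
   the middle parts past the outer factors u j and v j costs their commutation signs. *)
lemma spinv_conj_prod:
  fixes u x y v :: "nat \<Rightarrow> spauli"
  defines "D j \<equiv> lbl (\<Prod>i\<leftarrow>[0..<j]. x i) + lbl (\<Prod>i\<leftarrow>[0..<j]. y i)"
  shows "spinv (\<Prod>j\<leftarrow>[0..<n]. u j * x j * v j) * (\<Prod>j\<leftarrow>[0..<n]. u j * y j * v j)
    = negate_if (\<Sum>j<n. anticomm (lbl (u j)) (D j) + anticomm (lbl (v j)) (D (Suc j)))
        (spinv (\<Prod>j\<leftarrow>[0..<n]. x j) * (\<Prod>j\<leftarrow>[0..<n]. y j))"
proof (induction n)
  case 0
  show ?case by simp
next
  case (Suc n)
  define V where "V = spinv (\<Prod>j\<leftarrow>[0..<n]. x j) * (\<Prod>j\<leftarrow>[0..<n]. y j)"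
  define V' where "V' = spinv (\<Prod>j\<leftarrow>[0..<Suc n]. x j) * (\<Prod>j\<leftarrow>[0..<Suc n]. y j)"
  have V': "spinv (x n) * V * y n = V'"
    by (simp add: V'_def V_def spinv_times mult.assoc)
  have lbl_V: "lbl V = D n" and lbl_V': "lbl V' = D (Suc n)"
    by (simp_all add: V_def V'_def D_def)
  have "spinv (\<Prod>j\<leftarrow>[0..<Suc n]. u j * x j * v j) * (\<Prod>j\<leftarrow>[0..<Suc n]. u j * y j * v j)
     = spinv (u n * x n * v n)
       * (spinv (\<Prod>j\<leftarrow>[0..<n]. u j * x j * v j) * (\<Prod>j\<leftarrow>[0..<n]. u j * y j * v j))
       * (u n * y n * v n)"
    by (simp add: spinv_times mult.assoc)
  also have "\<dots> = negate_if (\<Sum>j<n. anticomm (lbl (u j)) (D j) + anticomm (lbl (v j)) (D (Suc j)))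
      (spinv (u n * x n * v n) * V * (u n * y n * v n))"
    by (simp only: Suc.IH V_def[symmetric] negate_if_times)
  also have "\<dots> = negate_if (\<Sum>j<n. anticomm (lbl (u j)) (D j) + anticomm (lbl (v j)) (D (Suc j)))
      (spinv (v n) * (spinv (x n) * (spinv (u n) * V * u n) * y n) * v n)"
    by (simp only: spinv_times mult.assoc)
  also have "\<dots> = negate_if (\<Sum>j<n. anticomm (lbl (u j)) (D j) + anticomm (lbl (v j)) (D (Suc j)))
      (negate_if (anticomm (lbl (u n)) (D n) + anticomm (lbl (v n)) (D (Suc n))) V')"
    by (simp only: spinv_conj lbl_V lbl_V' negate_if_times V' negate_if_negate_if)
  finally show ?case
    by (simp only: V'_def negate_if_negate_if sum.lessThan_Suc)
qed

definition sign_of :: "bool \<Rightarrow> complex" where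
  "sign_of b = (if b then -1 else 1)"

lemma sign_of_add: "sign_of (a + b) = sign_of a * sign_of b"
  by (simp add: xor_defs sign_of_def)

lemma sign_of_simps [simp]: "sign_of 0 = 1" "sign_of True = -1"
  by (simp_all add: zero_bool_def sign_of_def)

lemma sign_of_square [simp]: "sign_of b * sign_of b = 1"
  by (simp add: xor_defs sign_of_def)

lemma cnj_sign_of [simp]: "cnj (sign_of b) = sign_of b"
  by (simp add: sign_of_def)

definition spmat :: "spauli \<Rightarrow> qop1" where
  "spmat t x y = sign_of (neg t) * pauli (lbl t) x y"

lemma sum_spmat_times: "(\<Sum>c\<in>UNIV. spmat a x c * spmat b c y) = spmat (a * b) x y"
  by (cases "lbl a"; cases "lbl b")
     (auto simp: spmat_def sign_of_def pauli_def times_spauli_def UNIV_bool xor_defs)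

lemma sign_of_spinv_times:
  assumes "lbl a = lbl b"
  shows "sign_of (neg (spinv a)) * sign_of (neg (spinv b)) = sign_of (neg (spinv a * b))"
  using assms by (auto simp: sign_of_def spinv_def times_spauli_def xor_defs)

abbreviation inv_sqrt2 :: complex where "inv_sqrt2 \<equiv> 1 / complex_of_real (sqrt 2)"

lemma sqrt2_square: "complex_of_real (sqrt 2) * complex_of_real (sqrt 2) = 2"
proof -
  have "sqrt 2 * sqrt 2 = (2::real)"
    by simp
  then show ?thesis
    by (metis of_real_mult of_real_numeral)
qed

lemma spmat_eq_bell:
  "spmat t a b = complex_of_real (sqrt 2) * sign_of (neg (spinv t)) * bell (lbl t) (a, b)"
  by (cases "lbl t"; cases a; cases b)
     (auto simp: spmat_def sign_of_def spinv_def bell_def pauli_def xor_defs)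

lemma sum_reverse4:
  "(\<Sum>a\<in>A. \<Sum>b\<in>B. \<Sum>c\<in>C. \<Sum>d\<in>D. f a b c d) = (\<Sum>d\<in>D. \<Sum>c\<in>C. \<Sum>b\<in>B. \<Sum>a\<in>A. f a b c d)"
proof -
  have "(\<Sum>a\<in>A. \<Sum>b\<in>B. \<Sum>c\<in>C. \<Sum>d\<in>D. f a b c d) = (\<Sum>a\<in>A. \<Sum>d\<in>D. \<Sum>b\<in>B. \<Sum>c\<in>C. f a b c d)"
    by (intro sum.cong[OF refl] trans[OF sum.cong[OF refl sum.swap] sum.swap])
  also have "\<dots> = (\<Sum>d\<in>D. \<Sum>a\<in>A. \<Sum>c\<in>C. \<Sum>b\<in>B. f a b c d)"
    by (intro trans[OF sum.cong[OF refl sum.cong[OF refl sum.swap]] sum.swap])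
  also have "\<dots> = (\<Sum>d\<in>D. \<Sum>c\<in>C. \<Sum>b\<in>B. \<Sum>a\<in>A. f a b c d)"
    by (intro sum.cong[OF refl] trans[OF sum.swap sum.cong[OF refl sum.swap]])
  finally show ?thesis .
qed

lemma sum_swap_pairs:
  "(\<Sum>a\<in>A. \<Sum>b\<in>B. \<Sum>c\<in>C. \<Sum>d\<in>D. f a b c d) = (\<Sum>c\<in>C. \<Sum>d\<in>D. \<Sum>a\<in>A. \<Sum>b\<in>B. f a b c d)"
proof -
  have "(\<Sum>a\<in>A. \<Sum>b\<in>B. \<Sum>c\<in>C. \<Sum>d\<in>D. f a b c d) = (\<Sum>d\<in>D. \<Sum>c\<in>C. \<Sum>b\<in>B. \<Sum>a\<in>A. f a b c d)"
    by (rule sum_reverse4)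
  also have "\<dots> = (\<Sum>c\<in>C. \<Sum>d\<in>D. \<Sum>a\<in>A. \<Sum>b\<in>B. f a b c d)"
    by (rule trans[OF sum.swap sum.cong[OF refl sum.cong[OF refl sum.swap]]])
  finally show ?thesis .
qed

lemma sum_rotate3: "(\<Sum>x\<in>A. \<Sum>y\<in>B. \<Sum>z\<in>C. f x y z) = (\<Sum>z\<in>C. \<Sum>x\<in>A. \<Sum>y\<in>B. f x y z)"
  by (simp only: sum.swap[of _ B C] sum.swap[of _ A C])

lemma prod_sum_sum_PiE:
  fixes f :: "'i \<Rightarrow> 'a :: finite \<Rightarrow> 'b :: finite \<Rightarrow> 'c :: comm_semiring_1"
  assumes "finite I"
  shows "(\<Prod>i\<in>I. \<Sum>a\<in>UNIV. \<Sum>b\<in>UNIV. f i a b)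
       = (\<Sum>\<alpha>\<in>PiE I (\<lambda>_. UNIV). \<Sum>\<beta>\<in>PiE I (\<lambda>_. UNIV). \<Prod>i\<in>I. f i (\<alpha> i) (\<beta> i))"
  using assms by (simp add: prod_sum_PiE)

lemma sum_lessThan_even_odd:
  fixes f g :: "nat \<Rightarrow> 'a :: comm_monoid_add"
  shows "(\<Sum>j<m. if even j then f (j div 2 + 1) else g ((j + 1) div 2))
       = (\<Sum>k\<in>{1..(m + 1) div 2}. f k) + (\<Sum>k\<in>{1..m div 2}. g k)"
proof (induction m)
  case (Suc m)
  show ?case
  proof (cases "even m")
    case True
    then obtain i where "m = 2 * i"
      by (rule evenE)
    then show ?thesis
      using Suc.IH by (simp add: add_ac)
  next
    case False
    then obtain i where "m = 2 * i + 1"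
      by (rule oddE)
    then show ?thesis
      using Suc.IH by (simp add: add_ac)
  qed
qed simp

lemma double_minus_1_div_2:
  fixes N :: nat
  assumes "N \<ge> 1"
  shows "(2*N-1 + 1) div 2 = N" "(2*N-1) div 2 = N-1"
  using assms by presburger+

lemma lessThan_double_Suc: "{..<2 * Suc N} = insert (Suc (2 * N)) (insert (2 * N) {..<2 * N})"
  by auto

lemma prod_lessThan_double:
  "(\<Prod>q<2*N. f q) = (\<Prod>k\<in>{1..(N::nat)}. f (2*k-2) * f (2*k-1))"
  by (induction N) (auto simp: prod.cl_ivl_Suc lessThan_double_Suc mult_ac)

lemma prod_atMost_double:
  "(\<Prod>j\<le>2*M. f j) = (\<Prod>k\<in>{1..Suc M}. f (2*k-2)) * (\<Prod>k\<in>{1..M}. f (2*k-1))"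
proof (induction M)
  case (Suc M)
  have "{..2 * Suc M} = insert (Suc (Suc (2*M))) (insert (Suc (2*M)) {..2*M})"
    by auto
  then show ?case
    using Suc by (simp add: prod.cl_ivl_Suc mult_ac)
qed simp

lemma bas_eq_image_Pow: "bas Q = (\<lambda>S i. i \<in> S) ` Pow Q"
proof
  show "bas Q \<subseteq> (\<lambda>S i. i \<in> S) ` Pow Q"
  proof
    fix x assume "x \<in> bas Q"
    then have "x = (\<lambda>i. i \<in> {i. x i})" "{i. x i} \<in> Pow Q" by (auto simp: bas_def)
    then show "x \<in> (\<lambda>S i. i \<in> S) ` Pow Q" by blast
  qed
qed (auto simp: bas_def)

lemma finite_bas [simp]: "finite Q \<Longrightarrow> finite (bas Q)"
  by (simp add: bas_eq_image_Pow)

lemma bas_empty [simp]: "bas {} = {\<lambda>_. False}"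
  by (auto simp: bas_def)

lemma sum_bas_insert:
  assumes "i \<notin> Q" "finite Q"
  shows "(\<Sum>x\<in>bas (insert i Q). h x) = (\<Sum>x\<in>bas Q. \<Sum>c\<in>UNIV. h (x(i := c)))"
proof -
  have "(\<Sum>x\<in>bas (insert i Q). h x) = (\<Sum>(x, c)\<in>bas Q \<times> UNIV. h (x(i := c)))"
    by (rule sum.reindex_bij_witness[where j = "\<lambda>y. (y(i := False), y i)" and i = "\<lambda>(x, c). x(i := c)"])
       (use assms(1) in \<open>auto simp: bas_def fun_eq_iff\<close>)
  also have "\<dots> = (\<Sum>x\<in>bas Q. \<Sum>c\<in>UNIV. h (x(i := c)))"
    by (simp add: sum.cartesian_product assms(2))
  finally show ?thesis .
qed

lemma sum_bas_links:
  fixes h :: "nat \<Rightarrow> bool \<Rightarrow> bool \<Rightarrow> complex"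
  shows "(\<Sum>x\<in>bas {..<2*N}. \<Prod>k\<in>{1..N}. h k (x (2*k-2)) (x (2*k-1)))
       = (\<Prod>k\<in>{1..N}. \<Sum>p\<in>UNIV. \<Sum>q\<in>UNIV. h k p q)"
proof (induction N)
  case 0
  then show ?case by simp
next
  case (Suc N)
  let ?x = "\<lambda>x c d. x(2*N := c, Suc (2*N) := d)"
  have split_last: "(\<Prod>k\<in>{1..Suc N}. h k (?x x c d (2*k-2)) (?x x c d (2*k-1)))
      = (\<Prod>k\<in>{1..N}. h k (x (2*k-2)) (x (2*k-1))) * h (Suc N) c d" for x c d
  proof -
    have "(\<Prod>k\<in>{1..N}. h k (?x x c d (2*k-2)) (?x x c d (2*k-1)))
        = (\<Prod>k\<in>{1..N}. h k (x (2*k-2)) (x (2*k-1)))"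
      by (rule prod.cong) auto
    then show ?thesis
      by (simp add: prod.cl_ivl_Suc)
  qed
  have "(\<Sum>x\<in>bas {..<2 * Suc N}. \<Prod>k\<in>{1..Suc N}. h k (x (2*k-2)) (x (2*k-1)))
      = (\<Sum>x\<in>bas {..<2*N}. \<Sum>c\<in>UNIV. \<Sum>d\<in>UNIV.
           \<Prod>k\<in>{1..Suc N}. h k (?x x c d (2*k-2)) (?x x c d (2*k-1)))"
    unfolding lessThan_double_Suc by (simp add: sum_bas_insert)
  also have "\<dots> = (\<Sum>x\<in>bas {..<2*N}. (\<Prod>k\<in>{1..N}. h k (x (2*k-2)) (x (2*k-1)))
                     * (\<Sum>c\<in>UNIV. \<Sum>d\<in>UNIV. h (Suc N) c d))"
    by (simp only: split_last sum_distrib_left)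
  also have "\<dots> = (\<Prod>k\<in>{1..Suc N}. \<Sum>p\<in>UNIV. \<Sum>q\<in>UNIV. h k p q)"
    by (simp only: sum_distrib_right[symmetric] Suc.IH) (simp add: prod.cl_ivl_Suc)
  finally show ?case .
qed

lemma sum_bas_chain:
  fixes c :: complex
  shows "(\<Sum>r\<in>bas {1..n}. \<Prod>j\<le>n. c * spmat (t j) ((r(0 := a, Suc n := b)) j) ((r(0 := a, Suc n := b)) (Suc j)))
       = c ^ Suc n * spmat (\<Prod>j\<leftarrow>[0..<Suc n]. t j) a b"
proof (induction n arbitrary: b)
  case 0
  then show ?case by simp
next
  case (Suc n)
  let ?r = "\<lambda>r d. r(0 := a, Suc n := d)"
  let ?R = "\<lambda>r d. (r(Suc n := d))(0 := a, Suc (Suc n) := b)"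
  have sum_bas_insert_Suc: "(\<Sum>r\<in>bas {1..Suc n}. F r) = (\<Sum>r\<in>bas {1..n}. \<Sum>d\<in>UNIV. F (r(Suc n := d)))"
    for F :: "(nat \<Rightarrow> bool) \<Rightarrow> complex"
    using sum_bas_insert[of "Suc n" "{1..n}" F] by (simp add: atLeastAtMostSuc_conv)
  have split_last: "(\<Prod>j\<le>Suc n. c * spmat (t j) (?R r d j) (?R r d (Suc j)))
      = (\<Prod>j\<le>n. c * spmat (t j) (?r r d j) (?r r d (Suc j))) * (c * spmat (t (Suc n)) d b)" for r d
    by (simp add: prod.atMost_Suc) (auto intro!: prod.cong)
  have "(\<Sum>r\<in>bas {1..Suc n}. \<Prod>j\<le>Suc n. c * spmat (t j) ((r(0 := a, Suc (Suc n) := b)) j) ((r(0 := a, Suc (Suc n) := b)) (Suc j)))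
      = (\<Sum>r\<in>bas {1..n}. \<Sum>d\<in>UNIV. \<Prod>j\<le>Suc n. c * spmat (t j) (?R r d j) (?R r d (Suc j)))"
    by (simp only: sum_bas_insert_Suc)
  also have "\<dots> = (\<Sum>d\<in>UNIV. (\<Sum>r\<in>bas {1..n}. \<Prod>j\<le>n. c * spmat (t j) (?r r d j) (?r r d (Suc j)))
                      * (c * spmat (t (Suc n)) d b))"
    by (simp only: split_last sum_distrib_right sum.swap[of _ "bas _"])
  also have "\<dots> = (\<Sum>d\<in>UNIV. c ^ Suc n * spmat (\<Prod>j\<leftarrow>[0..<Suc n]. t j) a d * (c * spmat (t (Suc n)) d b))"
    by (simp only: Suc.IH)
  also have "\<dots> = c ^ Suc (Suc n) * (\<Sum>d\<in>UNIV. spmat (\<Prod>j\<leftarrow>[0..<Suc n]. t j) a d * spmat (t (Suc n)) d b)"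
    by (simp add: sum_distrib_left mult_ac)
  also have "\<dots> = c ^ Suc (Suc n) * spmat (\<Prod>j\<leftarrow>[0..<Suc (Suc n)]. t j) a b"
    by (simp only: sum_spmat_times) (simp add: mult.assoc)
  finally show ?case .
qed

lemma sum_bas_ends:
  fixes H :: "(nat \<Rightarrow> bool) \<Rightarrow> complex"
  assumes "0 < m"
  shows "(\<Sum>z\<in>bas {..m}. if z 0 = a \<and> z m = b then H z else 0)
       = (\<Sum>r\<in>bas {1..<m}. H (r(0 := a, m := b)))"
proof -
  have "{..m} = insert 0 (insert m {1..<m})" "0 \<notin> insert m {1..<m}" "m \<notin> {1..<m}"
    using assms by auto
  then have "(\<Sum>z\<in>bas {..m}. if z 0 = a \<and> z m = b then H z else 0)
      = (\<Sum>r\<in>bas {1..<m}. \<Sum>d\<in>UNIV. \<Sum>c\<in>UNIV. if c = a \<and> d = b then H (r(m := d, 0 := c)) else 0)"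
    using assms by (simp add: sum_bas_insert)
  also have "\<dots> = (\<Sum>r\<in>bas {1..<m}. H (r(m := b, 0 := a)))"
    by (cases a; cases b) (simp_all add: UNIV_bool)
  finally show ?thesis
    using assms by (simp add: fun_upd_twist[of m 0])
qed

section \<open>The Bell basis\<close>

lemma bell_real [simp]: "cnj (bell g u) = bell g u"
  by (cases g; cases u) (simp_all add: bell_def pauli_def)

lemma bell_orthonormal: "(\<Sum>p\<in>UNIV. bell a p * bell b p) = (if a = b then 1 else 0)"
  unfolding sum_UNIV_label
  by (cases a; cases b) (simp_all add: bell_def pauli_def sqrt2_square)

lemma bell_complete: "(\<Sum>a\<in>UNIV. bell a p * bell a q) = (if p = q then 1 else 0)"
  unfolding sum_UNIV_label
  by (cases p; cases q) (simp_all add: bell_def pauli_def sqrt2_square)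

definition bell_coef :: "qop2 \<Rightarrow> bool \<times> bool \<Rightarrow> bool \<times> bool \<Rightarrow> complex" where
  "bell_coef \<rho> a b = (\<Sum>p\<in>UNIV. \<Sum>q\<in>UNIV. bell a p * \<rho> p q * bell b q)"

lemma bell_expansion: "\<rho> p q = (\<Sum>a\<in>UNIV. \<Sum>b\<in>UNIV. bell_coef \<rho> a b * bell a p * bell b q)"
proof -
  have "(\<Sum>a\<in>UNIV. \<Sum>b\<in>UNIV. bell_coef \<rho> a b * bell a p * bell b q)
      = (\<Sum>a\<in>UNIV. \<Sum>b\<in>UNIV. \<Sum>p'\<in>UNIV. \<Sum>q'\<in>UNIV.
           \<rho> p' q' * (bell a p * bell a p') * (bell b q' * bell b q))"
    unfolding bell_coef_def by (simp add: sum_distrib_left sum_distrib_right mult_ac)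
  also have "\<dots> = (\<Sum>q'\<in>UNIV. \<Sum>p'\<in>UNIV. \<Sum>b\<in>UNIV. \<Sum>a\<in>UNIV.
           \<rho> p' q' * (bell a p * bell a p') * (bell b q' * bell b q))"
    by (rule sum_reverse4)
  also have "\<dots> = (\<Sum>q'\<in>UNIV. \<Sum>p'\<in>UNIV.
           \<rho> p' q' * (\<Sum>b\<in>UNIV. bell b q' * bell b q) * (\<Sum>a\<in>UNIV. bell a p * bell a p'))"
    by (simp add: sum_distrib_left sum_distrib_right mult_ac)
  also have "\<dots> = \<rho> p q"
    by (simp add: bell_complete if_distrib[of "\<lambda>x. _ * x"] sum.delta cong: if_cong)
  finally show ?thesis ..
qed

lemma bell_coef_bellproj: "bell_coef (bellproj g) a b = (if a = g \<and> b = g then 1 else 0)"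
proof -
  have "bell_coef (bellproj g) a b = (\<Sum>p\<in>UNIV. bell a p * bell g p) * (\<Sum>q\<in>UNIV. bell g q * bell b q)"
    unfolding bell_coef_def bellproj_def by (simp add: sum_product mult_ac)
  then show ?thesis
    by (simp add: bell_orthonormal)
qed

definition labels :: "nat \<Rightarrow> (nat \<Rightarrow> bool \<times> bool) set" where
  "labels N = PiE {1..N} (\<lambda>_. UNIV)"

lemma finite_labels [simp]: "finite (labels N)"
  by (simp add: labels_def finite_PiE)

definition link_coef :: "nat \<Rightarrow> (nat \<Rightarrow> qop2) \<Rightarrow> (nat \<Rightarrow> bool \<times> bool) \<Rightarrow> (nat \<Rightarrow> bool \<times> bool) \<Rightarrow> complex" where
  "link_coef N \<rho> \<alpha> \<beta> = (\<Prod>k\<in>{1..N}. bell_coef (\<rho> k) (\<alpha> k) (\<beta> k))"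

definition bell_chain :: "nat \<Rightarrow> (nat \<Rightarrow> bool \<times> bool) \<Rightarrow> (nat \<Rightarrow> bool) \<Rightarrow> complex" where
  "bell_chain N \<alpha> x = (\<Prod>k\<in>{1..N}. bell (\<alpha> k) (x (2*k-2), x (2*k-1)))"

lemma chain_in_bell_expansion:
  "chain_in N \<rho> x y
     = (\<Sum>\<alpha>\<in>labels N. \<Sum>\<beta>\<in>labels N. link_coef N \<rho> \<alpha> \<beta> * bell_chain N \<alpha> x * bell_chain N \<beta> y)"
proof -
  have "chain_in N \<rho> x y = (\<Prod>k\<in>{1..N}. \<Sum>a\<in>UNIV. \<Sum>b\<in>UNIV.
      bell_coef (\<rho> k) a b * bell a (x (2*k-2), x (2*k-1)) * bell b (y (2*k-2), y (2*k-1)))"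
    unfolding chain_in_def by (intro prod.cong refl) (rule bell_expansion)
  then show ?thesis
    by (simp add: prod_sum_sum_PiE labels_def link_coef_def bell_chain_def prod.distrib)
qed

lemma link_coef_bell_input:
  assumes "\<alpha> \<in> labels N" "\<beta> \<in> labels N"
  shows "link_coef N (\<lambda>_. bellproj 0) \<alpha> \<beta> = (if \<alpha> = (\<lambda>k\<in>{1..N}. 0) \<and> \<beta> = (\<lambda>k\<in>{1..N}. 0) then 1 else 0)"
proof -
  have "(\<forall>k\<in>{1..N}. \<alpha> k = 0 \<and> \<beta> k = 0) \<longleftrightarrow> \<alpha> = (\<lambda>k\<in>{1..N}. 0) \<and> \<beta> = (\<lambda>k\<in>{1..N}. 0)"
    using assms by (auto simp: labels_def PiE_def extensional_def fun_eq_iff)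
  moreover have "link_coef N (\<lambda>_. bellproj 0) \<alpha> \<beta> = (if \<forall>k\<in>{1..N}. \<alpha> k = 0 \<and> \<beta> k = 0 then 1 else 0)"
    unfolding link_coef_def bell_coef_bellproj by (simp add: prod_zero_iff)
  ultimately show ?thesis
    by simp
qed

section \<open>Kraus form of the swapping map\<close>

definition ends :: "nat \<Rightarrow> (nat \<Rightarrow> bool) \<Rightarrow> bool \<times> bool \<Rightarrow> nat \<Rightarrow> bool" where
  "ends N r u = r(0 := fst u, 2*N-1 := snd u)"

definition bsm_amp :: "nat \<Rightarrow> (nat \<Rightarrow> bool \<times> bool) \<Rightarrow> (nat \<Rightarrow> bool) \<Rightarrow> complex" where
  "bsm_amp N s r = (\<Prod>k\<in>{1..N-1}. bell (s k) (r (2*k-1), r (2*k)))"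

(* The row vector (<u| \<otimes> <Psi_s|) C_s: the only Kraus operator of Lambda_s. *)
definition kraus :: "nat \<Rightarrow> protocol \<Rightarrow> (nat \<Rightarrow> bool \<times> bool) \<Rightarrow> bool \<times> bool \<Rightarrow> (nat \<Rightarrow> bool) \<Rightarrow> complex" where
  "kraus N P s u x = (\<Sum>r\<in>bas {1..2*N-2}. cnj (bsm_amp N s r) * corr_op N P s (ends N r u) x)"

lemma bsm_amp_ends:
  assumes "N \<ge> 1"
  shows "bsm_amp N s (ends N r u) = bsm_amp N s r"
  unfolding bsm_amp_def ends_def by (rule prod.cong) (use assms in auto)

lemma bsm_proj_ends:
  assumes "N \<ge> 1"
  shows "bsm_proj N s (ends N r u) z
       = bsm_amp N s r * cnj (bsm_amp N s z) * (if z 0 = fst u \<and> z (2*N-1) = snd u then 1 else 0)"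
proof -
  have "ends N r u 0 = fst u" "ends N r u (2*N-1) = snd u"
    using assms by (auto simp: ends_def)
  then show ?thesis
    using bsm_amp_ends[OF assms, of s r u]
    by (auto simp: bsm_proj_def bsm_amp_def bellproj_def prod.distrib)
qed

lemma Lambda_s_kraus:
  assumes "N \<ge> 1"
  shows "Lambda_s N P s \<rho> u w
       = (\<Sum>x\<in>bas {..<2*N}. \<Sum>y\<in>bas {..<2*N}. kraus N P s u x * \<rho> x y * cnj (kraus N P s w y))"
proof -
  define C where "C = corr_op N P s"
  define R where "R = bas {1..2*N-2}"
  define B where "B = bas {..<2*N}"
  define G where "G = (\<lambda>r z. \<Sum>y\<in>B. (\<Sum>x\<in>B. C z x * \<rho> x y) * cnj (C (ends N r w) y))"
  have sum_ends: "(\<Sum>z\<in>B. if z 0 = fst u \<and> z (2*N-1) = snd u then F z else 0) = (\<Sum>r'\<in>R. F (ends N r' u))"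
    for F :: "(nat \<Rightarrow> bool) \<Rightarrow> complex"
  proof -
    have "B = bas {..2*N-1}" "R = bas {1..<2*N-1}" "0 < 2*N-1"
      using assms by (auto simp: B_def R_def intro!: arg_cong[where f = bas])
    then show ?thesis
      using sum_bas_ends[of "2*N-1" "fst u" "snd u" F] by (simp add: ends_def)
  qed
  have "Lambda_s N P s \<rho> u w = (\<Sum>r\<in>R. \<Sum>z\<in>B. bsm_proj N s (ends N r u) z * G r z)"
    unfolding Lambda_s_def Let_def fmult_def fadj_def C_def R_def B_def G_def ends_def by simp
  also have "\<dots> = (\<Sum>r\<in>R. \<Sum>z\<in>B.
      if z 0 = fst u \<and> z (2*N-1) = snd u then bsm_amp N s r * cnj (bsm_amp N s z) * G r z else 0)"
    by (auto simp: bsm_proj_ends[OF assms] intro!: sum.cong)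
  also have "\<dots> = (\<Sum>r\<in>R. \<Sum>r'\<in>R. bsm_amp N s r * cnj (bsm_amp N s r') * G r (ends N r' u))"
    by (simp only: sum_ends bsm_amp_ends[OF assms])
  also have "\<dots> = (\<Sum>r\<in>R. \<Sum>r'\<in>R. \<Sum>y\<in>B. \<Sum>x\<in>B. cnj (bsm_amp N s r') * C (ends N r' u) x * \<rho> x y
          * cnj (cnj (bsm_amp N s r) * C (ends N r w) y))"
    by (simp add: G_def sum_distrib_left sum_distrib_right mult_ac)
  also have "\<dots> = (\<Sum>x\<in>B. \<Sum>y\<in>B. kraus N P s u x * \<rho> x y * cnj (kraus N P s w y))"
    by (subst sum_reverse4) (simp add: kraus_def C_def R_def sum_distrib_left sum_distrib_right mult_ac)
  finally show ?thesis
    unfolding B_def .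
qed

section \<open>Swapping a chain of Bell states\<close>

definition corr_lbl :: "protocol \<Rightarrow> (nat \<Rightarrow> bool \<times> bool) \<Rightarrow> nat \<Rightarrow> bool \<times> bool" where
  "corr_lbl P s q = (if q = 0 then P s 0 else if odd q then P s ((q + 1) div 2) else 0)"

lemma corr_gate_eq_pauli: "corr_gate P s q = pauli (corr_lbl P s q)"
  by (auto simp: corr_gate_def corr_lbl_def pI_def pauli_def fun_eq_iff zero_prod_def zero_bool_def)

(* Factor j of the swap word carries the amplitude from qubit j to qubit j + 1: for even
   j = 2k - 2 it is the link state Psi_(alpha k) between the corrections on its two qubits, for
   odd j = 2k - 1 the BSM outcome Psi_(s k).  As a matrix, Psi_g is the transpose of X^m Z^n over sqrt 2, and
   transposition inverts X^m Z^n. *)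
definition frame_left :: "protocol \<Rightarrow> (nat \<Rightarrow> bool \<times> bool) \<Rightarrow> nat \<Rightarrow> spauli" where
  "frame_left P s j =
     (if even j then SPauli False (corr_lbl P s j) else spinv (SPauli False (s ((j + 1) div 2))))"

definition link_factor :: "(nat \<Rightarrow> bool \<times> bool) \<Rightarrow> nat \<Rightarrow> spauli" where
  "link_factor \<alpha> j = (if even j then spinv (SPauli False (\<alpha> (j div 2 + 1))) else 1)"

definition frame_right :: "protocol \<Rightarrow> (nat \<Rightarrow> bool \<times> bool) \<Rightarrow> nat \<Rightarrow> spauli" where
  "frame_right P s j = (if even j then spinv (SPauli False (corr_lbl P s (Suc j))) else 1)"

definition swap_factor :: "protocol \<Rightarrow> (nat \<Rightarrow> bool \<times> bool) \<Rightarrow> (nat \<Rightarrow> bool \<times> bool) \<Rightarrow> nat \<Rightarrow> spauli" where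
  "swap_factor P s \<alpha> j = frame_left P s j * link_factor \<alpha> j * frame_right P s j"

definition swap_word :: "nat \<Rightarrow> protocol \<Rightarrow> (nat \<Rightarrow> bool \<times> bool) \<Rightarrow> (nat \<Rightarrow> bool \<times> bool) \<Rightarrow> spauli" where
  "swap_word N P s \<alpha> = (\<Prod>j\<leftarrow>[0..<2*N-1]. swap_factor P s \<alpha> j)"

definition swap_amp :: "nat \<Rightarrow> protocol \<Rightarrow> (nat \<Rightarrow> bool \<times> bool) \<Rightarrow> (nat \<Rightarrow> bool \<times> bool) \<Rightarrow> bool \<times> bool \<Rightarrow> complex" where
  "swap_amp N P s \<alpha> u = (\<Sum>x\<in>bas {..<2*N}. kraus N P s u x * bell_chain N \<alpha> x)"

lemma sum_pauli_bell:
  "(\<Sum>p\<in>UNIV. \<Sum>q\<in>UNIV. pauli g a p * pauli h b q * bell c (p, q))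
     = inv_sqrt2 * spmat (SPauli False g * spinv (SPauli False c) * spinv (SPauli False h)) a b"
  by (cases g; cases h; cases c; cases a; cases b)
     (simp_all add: UNIV_bool pauli_def bell_def spmat_def sign_of_def times_spauli_def spinv_def xor_defs)

lemma cnj_bell_eq_spmat: "cnj (bell c (a, b)) = inv_sqrt2 * spmat (spinv (SPauli False c)) a b"
  by (cases c; cases a; cases b) (simp_all add: pauli_def bell_def spmat_def sign_of_def spinv_def xor_defs)

lemma sum_corr_op_bell_chain:
  "(\<Sum>x\<in>bas {..<2*N}. corr_op N P s z x * bell_chain N \<alpha> x)
     = (\<Prod>k\<in>{1..N}. inv_sqrt2 * spmat (swap_factor P s \<alpha> (2*k-2)) (z (2*k-2)) (z (2*k-1)))"
proof -
  have "(\<Sum>x\<in>bas {..<2*N}. corr_op N P s z x * bell_chain N \<alpha> x)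
      = (\<Sum>x\<in>bas {..<2*N}. \<Prod>k\<in>{1..N}. pauli (corr_lbl P s (2*k-2)) (z (2*k-2)) (x (2*k-2)) *
            pauli (corr_lbl P s (2*k-1)) (z (2*k-1)) (x (2*k-1)) * bell (\<alpha> k) (x (2*k-2), x (2*k-1)))"
    unfolding corr_op_def bell_chain_def corr_gate_eq_pauli prod_lessThan_double by (simp add: prod.distrib)
  also have "\<dots> = (\<Prod>k\<in>{1..N}. \<Sum>p\<in>UNIV. \<Sum>q\<in>UNIV. pauli (corr_lbl P s (2*k-2)) (z (2*k-2)) p *
            pauli (corr_lbl P s (2*k-1)) (z (2*k-1)) q * bell (\<alpha> k) (p, q))"
    by (rule sum_bas_links)
  also have "\<dots> = (\<Prod>k\<in>{1..N}. inv_sqrt2 * spmat (swap_factor P s \<alpha> (2*k-2)) (z (2*k-2)) (z (2*k-1)))"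
  proof (rule prod.cong[OF refl])
    fix k :: nat
    assume "k \<in> {1..N}"
    then have "even (2*k-2)" "(2*k-2) div 2 + 1 = k" "Suc (2*k-2) = 2*k-1"
      by auto
    then show "(\<Sum>p\<in>UNIV. \<Sum>q\<in>UNIV. pauli (corr_lbl P s (2*k-2)) (z (2*k-2)) p *
            pauli (corr_lbl P s (2*k-1)) (z (2*k-1)) q * bell (\<alpha> k) (p, q))
        = inv_sqrt2 * spmat (swap_factor P s \<alpha> (2*k-2)) (z (2*k-2)) (z (2*k-1))"
      unfolding sum_pauli_bell swap_factor_def frame_left_def link_factor_def frame_right_def
      by simp
  qed
  finally show ?thesis .
qed

lemma cnj_bsm_amp:
  "cnj (bsm_amp N s r)
     = (\<Prod>k\<in>{1..N-1}. inv_sqrt2 * spmat (swap_factor P s \<alpha> (2*k-1)) (r (2*k-1)) (r (2*k)))"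
  unfolding bsm_amp_def
proof (simp only: cnj_prod, rule prod.cong[OF refl])
  fix k :: nat
  assume "k \<in> {1..N-1}"
  then have "odd (2*k-1)" "(2*k-1+1) div 2 = k"
    by auto
  then show "cnj (bell (s k) (r (2*k-1), r (2*k)))
      = inv_sqrt2 * spmat (swap_factor P s \<alpha> (2*k-1)) (r (2*k-1)) (r (2*k))"
    unfolding cnj_bell_eq_spmat swap_factor_def frame_left_def link_factor_def frame_right_def
    by simp
qed

lemma swap_amp_eq_spmat:
  assumes "N \<ge> 1"
  shows "swap_amp N P s \<alpha> u = inv_sqrt2 ^ (2*N-1) * spmat (swap_word N P s \<alpha>) (fst u) (snd u)"
proof -
  define T where "T = (\<lambda>j p q. inv_sqrt2 * spmat (swap_factor P s \<alpha> j) p q)"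
  obtain M where M: "N = Suc M"
    using assms by (cases N) auto
  have "swap_amp N P s \<alpha> u = (\<Sum>r\<in>bas {1..2*N-2}. cnj (bsm_amp N s r) *
           (\<Sum>x\<in>bas {..<2*N}. corr_op N P s (ends N r u) x * bell_chain N \<alpha> x))"
    unfolding swap_amp_def kraus_def
    by (simp add: sum_distrib_left sum_distrib_right mult_ac) (rule sum.swap)
  also have "\<dots> = (\<Sum>r\<in>bas {1..2*N-2}. \<Prod>j\<le>2*N-2. T j (ends N r u j) (ends N r u (Suc j)))"
  proof (rule sum.cong[OF refl])
    fix r
    have bsm: "cnj (bsm_amp N s r)
        = (\<Prod>k\<in>{1..N-1}. T (2*k-1) (ends N r u (2*k-1)) (ends N r u (Suc (2*k-1))))"
      unfolding cnj_bsm_amp[of N s r P \<alpha>] T_def by (rule prod.cong[OF refl]) (auto simp: ends_def)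
    have links: "(\<Sum>x\<in>bas {..<2*N}. corr_op N P s (ends N r u) x * bell_chain N \<alpha> x)
        = (\<Prod>k\<in>{1..N}. T (2*k-2) (ends N r u (2*k-2)) (ends N r u (Suc (2*k-2))))"
      unfolding sum_corr_op_bell_chain T_def
      by (rule prod.cong[OF refl]) (auto simp: Suc_diff_Suc numeral_2_eq_2)
    show "cnj (bsm_amp N s r) * (\<Sum>x\<in>bas {..<2*N}. corr_op N P s (ends N r u) x * bell_chain N \<alpha> x)
        = (\<Prod>j\<le>2*N-2. T j (ends N r u j) (ends N r u (Suc j)))"
      unfolding bsm links using prod_atMost_double[of "\<lambda>j. T j (ends N r u j) (ends N r u (Suc j))" M] M
      by (simp add: mult.commute)
  qed
  also have "\<dots> = inv_sqrt2 ^ (2*N-1) * spmat (swap_word N P s \<alpha>) (fst u) (snd u)"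
  proof -
    have "Suc (2*N-2) = 2*N-1"
      using assms by auto
    then show ?thesis
      using sum_bas_chain[where n = "2*N-2" and c = inv_sqrt2 and t = "swap_factor P s \<alpha>" and a = "fst u" and b = "snd u"]
      unfolding T_def ends_def swap_word_def by simp
  qed
  finally show ?thesis .
qed

lemma inv_sqrt2_power: "inv_sqrt2 ^ (2*M+1) * complex_of_real (sqrt 2) = (1/2) ^ M"
proof -
  have "inv_sqrt2 ^ (2*M+1) = (inv_sqrt2 ^ 2) ^ M * inv_sqrt2"
    by (simp only: power_mult power_add power_one_right)
  also have "inv_sqrt2 ^ 2 = 1/2"
    using sqrt2_square by (simp add: power2_eq_square)
  finally show ?thesis
    by simp
qed

definition swap_sign :: "nat \<Rightarrow> protocol \<Rightarrow> (nat \<Rightarrow> bool \<times> bool) \<Rightarrow> (nat \<Rightarrow> bool \<times> bool) \<Rightarrow> complex" where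
  "swap_sign N P s \<alpha> = sign_of (neg (spinv (swap_word N P s \<alpha>)))"

lemma swap_amp_eq_bell:
  assumes "N \<ge> 1"
  shows "swap_amp N P s \<alpha> u = (1/2) ^ (N-1) * swap_sign N P s \<alpha> * bell (lbl (swap_word N P s \<alpha>)) u"
proof -
  have "2*N-1 = 2*(N-1)+1"
    using assms by auto
  then show ?thesis
    unfolding swap_amp_eq_spmat[OF assms] spmat_eq_bell swap_sign_def
    by (simp add: inv_sqrt2_power[symmetric] mult_ac)
qed

lemma lbl_prod_upt: "lbl (\<Prod>j\<leftarrow>[0..<n]. t j) = (\<Sum>j<n. lbl (t j))"
  by (induction n) simp_all

lemma lbl_link_factors: "lbl (\<Prod>j\<leftarrow>[0..<m]. link_factor \<alpha> j) = (\<Sum>k\<in>{1..(m + 1) div 2}. \<alpha> k)"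
proof -
  have "lbl (\<Prod>j\<leftarrow>[0..<m]. link_factor \<alpha> j) = (\<Sum>j<m. if even j then \<alpha> (j div 2 + 1) else 0)"
    by (simp add: lbl_prod_upt link_factor_def if_distrib[of lbl] cong: if_cong)
  then show ?thesis
    using sum_lessThan_even_odd[where m = m and f = \<alpha> and g = "\<lambda>_. 0"] by simp
qed

lemma sum_corr_lbl:
  assumes "N \<ge> 1"
  shows "(\<Sum>k\<in>{1..N}. corr_lbl P s (2*k-2) + corr_lbl P s (2*k-1)) = P s 0 + (\<Sum>k\<in>{1..N}. P s k)"
proof -
  have "(\<Sum>k\<in>{1..N}. corr_lbl P s (2*k-2)) = (\<Sum>k\<in>{1..N}. if k = 1 then P s 0 else 0)"
    by (rule sum.cong) (auto simp: corr_lbl_def)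
  moreover have "(\<Sum>k\<in>{1..N}. corr_lbl P s (2*k-1)) = (\<Sum>k\<in>{1..N}. P s k)"
    by (rule sum.cong) (auto simp: corr_lbl_def)
  ultimately show ?thesis
    using assms by (simp add: sum.distrib sum.delta)
qed

definition residual_lbl :: "nat \<Rightarrow> protocol \<Rightarrow> (nat \<Rightarrow> bool \<times> bool) \<Rightarrow> bool \<times> bool" where
  "residual_lbl N P s = P s 0 + (\<Sum>k\<in>{1..N}. P s k) + (\<Sum>k\<in>{1..N-1}. s k)"

lemma lbl_swap_word:
  assumes "N \<ge> 1"
  shows "lbl (swap_word N P s \<alpha>) = residual_lbl N P s + (\<Sum>k\<in>{1..N}. \<alpha> k)"
proof -
  have "lbl (swap_word N P s \<alpha>) = (\<Sum>j<2*N-1. if even j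
      then (\<lambda>k. corr_lbl P s (2*k-2) + corr_lbl P s (2*k-1) + \<alpha> k) (j div 2 + 1)
      else s ((j + 1) div 2))"
    unfolding swap_word_def lbl_prod_upt
    by (rule sum.cong) (auto simp: swap_factor_def frame_left_def link_factor_def frame_right_def add_ac)
  also have "\<dots> = (\<Sum>k\<in>{1..N}. corr_lbl P s (2*k-2) + corr_lbl P s (2*k-1)) + (\<Sum>k\<in>{1..N}. \<alpha> k)
      + (\<Sum>k\<in>{1..N-1}. s k)"
    using assms double_minus_1_div_2[OF assms] sum_lessThan_even_odd[where m = "2*N-1" and g = s
        and f = "\<lambda>k. corr_lbl P s (2*k-2) + corr_lbl P s (2*k-1) + \<alpha> k"]
    by (simp add: sum.distrib)
  finally show ?thesis
    using sum_corr_lbl[OF assms, of P s] by (simp add: residual_lbl_def add_ac)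
qed

lemma Lambda_s_chain_in:
  assumes "N \<ge> 1"
  shows "Lambda_s N P s (chain_in N \<rho>) u w
       = (\<Sum>\<alpha>\<in>labels N. \<Sum>\<beta>\<in>labels N. (1/4) ^ (N-1) * link_coef N \<rho> \<alpha> \<beta>
            * (swap_sign N P s \<alpha> * swap_sign N P s \<beta>)
            * bell (residual_lbl N P s + (\<Sum>k\<in>{1..N}. \<alpha> k)) u
            * bell (residual_lbl N P s + (\<Sum>k\<in>{1..N}. \<beta> k)) w)"
proof -
  have "Lambda_s N P s (chain_in N \<rho>) u w
      = (\<Sum>x\<in>bas {..<2*N}. \<Sum>y\<in>bas {..<2*N}. \<Sum>\<alpha>\<in>labels N. \<Sum>\<beta>\<in>labels N. link_coef N \<rho> \<alpha> \<beta>
            * (kraus N P s u x * bell_chain N \<alpha> x) * cnj (kraus N P s w y * bell_chain N \<beta> y))"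
    unfolding Lambda_s_kraus[OF assms] chain_in_bell_expansion
    by (simp add: bell_chain_def sum_distrib_left sum_distrib_right mult_ac)
  also have "\<dots> = (\<Sum>\<alpha>\<in>labels N. \<Sum>\<beta>\<in>labels N. link_coef N \<rho> \<alpha> \<beta> * swap_amp N P s \<alpha> u * cnj (swap_amp N P s \<beta> w))"
    by (subst sum_swap_pairs)
       (simp add: swap_amp_def sum_distrib_left sum_distrib_right mult_ac del: complex_cnj_mult)
  also have "\<dots> = (\<Sum>\<alpha>\<in>labels N. \<Sum>\<beta>\<in>labels N. (1/4) ^ (N-1) * link_coef N \<rho> \<alpha> \<beta>
            * (swap_sign N P s \<alpha> * swap_sign N P s \<beta>)
            * bell (residual_lbl N P s + (\<Sum>k\<in>{1..N}. \<alpha> k)) u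
            * bell (residual_lbl N P s + (\<Sum>k\<in>{1..N}. \<beta> k)) w)"
  proof -
    have quarter: "(1/2::complex) ^ n * ((1/2) ^ n * x) = (1/4) ^ n * x" for n x
      by (simp add: mult.assoc[symmetric] power_mult_distrib[symmetric])
    show ?thesis
      by (simp add: swap_amp_eq_bell[OF assms] lbl_swap_word[OF assms] swap_sign_def mult_ac quarter)
  qed
  finally show ?thesis .
qed

section \<open>Averaging the signs over syndromes\<close>

lemma anticomm_frames:
  assumes "\<Delta> 0 = 0"
  shows "anticomm (lbl (frame_left P s j)) (\<Delta> ((j + 1) div 2))
           + anticomm (lbl (frame_right P s j)) (\<Delta> ((Suc j + 1) div 2))
       = (if even j then anticomm (P s (j div 2 + 1)) (\<Delta> (j div 2 + 1))
          else anticomm (s ((j + 1) div 2)) (\<Delta> ((j + 1) div 2)))"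
proof (cases "even j")
  case True
  then have "anticomm (corr_lbl P s j) (\<Delta> (j div 2)) = False"
    using assms by (cases "j = 0") (auto simp: corr_lbl_def)
  moreover have "corr_lbl P s (Suc j) = P s (j div 2 + 1)" "(j + 1) div 2 = j div 2" "(Suc j + 1) div 2 = j div 2 + 1"
    using True by (auto simp: corr_lbl_def elim!: evenE)
  ultimately show ?thesis
    using True by (simp add: frame_left_def frame_right_def)
next
  case False
  then show ?thesis
    by (simp add: frame_left_def frame_right_def)
qed

lemma spinv_swap_word_times:
  assumes "N \<ge> 1" and "(\<Sum>k\<in>{1..N}. \<alpha> k) = (\<Sum>k\<in>{1..N}. \<beta> k)"
  shows "spinv (swap_word N P s \<alpha>) * swap_word N P s \<beta>
       = negate_if (\<Sum>k\<in>{1..N-1}. anticomm (P s k) (\<Sum>i\<in>{1..k}. \<alpha> i + \<beta> i)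
                                   + anticomm (s k) (\<Sum>i\<in>{1..k}. \<alpha> i + \<beta> i))
           (spinv (\<Prod>j\<leftarrow>[0..<2*N-1]. link_factor \<alpha> j) * (\<Prod>j\<leftarrow>[0..<2*N-1]. link_factor \<beta> j))"
proof -
  define \<Delta> where "\<Delta> k = (\<Sum>i\<in>{1..k}. \<alpha> i + \<beta> i)" for k
  define D where "D j = lbl (\<Prod>i\<leftarrow>[0..<j]. link_factor \<alpha> i) + lbl (\<Prod>i\<leftarrow>[0..<j]. link_factor \<beta> i)" for j
  have D: "D j = \<Delta> ((j + 1) div 2)" for j
    by (simp add: D_def \<Delta>_def lbl_link_factors sum.distrib)
  have "\<Delta> N = 0"
    using assms(2) by (simp add: \<Delta>_def sum.distrib)
  have factor_term: "anticomm (lbl (frame_left P s j)) (D j) + anticomm (lbl (frame_right P s j)) (D (Suc j))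
      = (if even j then anticomm (P s (j div 2 + 1)) (\<Delta> (j div 2 + 1))
         else anticomm (s ((j + 1) div 2)) (\<Delta> ((j + 1) div 2)))" for j
    unfolding D by (rule anticomm_frames) (simp add: \<Delta>_def)
  have "spinv (swap_word N P s \<alpha>) * swap_word N P s \<beta>
      = negate_if (\<Sum>j<2*N-1. anticomm (lbl (frame_left P s j)) (D j) + anticomm (lbl (frame_right P s j)) (D (Suc j)))
          (spinv (\<Prod>j\<leftarrow>[0..<2*N-1]. link_factor \<alpha> j) * (\<Prod>j\<leftarrow>[0..<2*N-1]. link_factor \<beta> j))"
    unfolding swap_word_def swap_factor_def D_def by (rule spinv_conj_prod)
  also have "(\<Sum>j<2*N-1. anticomm (lbl (frame_left P s j)) (D j) + anticomm (lbl (frame_right P s j)) (D (Suc j)))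
      = (\<Sum>k\<in>{1..N}. anticomm (P s k) (\<Delta> k)) + (\<Sum>k\<in>{1..N-1}. anticomm (s k) (\<Delta> k))"
    by (simp only: factor_term double_minus_1_div_2[OF assms(1)]
        sum_lessThan_even_odd[where f = "\<lambda>k. anticomm (P s k) (\<Delta> k)" and g = "\<lambda>k. anticomm (s k) (\<Delta> k)"])
  also have "(\<Sum>k\<in>{1..N}. anticomm (P s k) (\<Delta> k)) = (\<Sum>k\<in>{1..N-1}. anticomm (P s k) (\<Delta> k))"
  proof -
    have "{1..N} = insert N {1..N-1}"
      using assms(1) by auto
    then show ?thesis
      using \<open>\<Delta> N = 0\<close> assms(1) by simp
  qed
  finally show ?thesis
    by (simp only: \<Delta>_def sum.distrib)
qed

lemma swap_sign_times:
  assumes "N \<ge> 1" and "(\<Sum>k\<in>{1..N}. \<alpha> k) = (\<Sum>k\<in>{1..N}. \<beta> k)"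
  shows "swap_sign N P s \<alpha> * swap_sign N P s \<beta>
       = sign_of (neg (spinv (\<Prod>j\<leftarrow>[0..<2*N-1]. link_factor \<alpha> j) * (\<Prod>j\<leftarrow>[0..<2*N-1]. link_factor \<beta> j)))
         * sign_of (\<Sum>k\<in>{1..N-1}. anticomm (P s k) (\<Sum>i\<in>{1..k}. \<alpha> i + \<beta> i)
                                   + anticomm (s k) (\<Sum>i\<in>{1..k}. \<alpha> i + \<beta> i))"
proof -
  have "lbl (swap_word N P s \<alpha>) = lbl (swap_word N P s \<beta>)"
    using assms by (simp add: lbl_swap_word)
  then show ?thesis
    unfolding swap_sign_def
    by (simp only: sign_of_spinv_times spinv_swap_word_times[OF assms] negate_if_def spauli.sel sign_of_add)
qed

lemma causal_correction_update:
  assumes ord: "bij_betw ord {1..N-1} {1..N-1}"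
    and causal: "\<forall>k\<in>{1..N-1}. \<forall>s\<in>syndromes N. \<forall>s'\<in>syndromes N.
            (\<forall>j\<in>{1..<k}. s (ord j) = s' (ord j)) \<longrightarrow> P s (ord k) = P s' (ord k)"
    and "i \<in> {1..N-1}" "m \<in> {1..N-1}" "i \<le> m"
    and "s \<in> syndromes N" "s(ord m := g) \<in> syndromes N"
  shows "P (s(ord m := g)) (ord i) = P s (ord i)"
proof -
  have "ord j \<noteq> ord m" if "j \<in> {1..<i}" for j
  proof
    assume "ord j = ord m"
    moreover have "j \<in> {1..N-1}"
      using that assms(3) by auto
    ultimately have "j = m"
      using assms(4) inj_onD[OF bij_betw_imp_inj_on[OF ord]] by blast
    then show False
      using that assms(5) by simp
  qed
  then have "\<forall>j\<in>{1..<i}. (s(ord m := g)) (ord j) = s (ord j)"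
    by simp
  then show ?thesis
    using causal assms(3,6,7) by blast
qed

lemma sum_negating_involution:
  fixes f :: "'a \<Rightarrow> 'b :: field_char_0"
  assumes "\<And>s. s \<in> S \<Longrightarrow> \<tau> s \<in> S" and "\<And>s. s \<in> S \<Longrightarrow> \<tau> (\<tau> s) = s"
    and "\<And>s. s \<in> S \<Longrightarrow> f (\<tau> s) = - f s"
  shows "sum f S = 0"
proof -
  have "sum f S = sum (f \<circ> \<tau>) S"
    by (rule sum.reindex_bij_witness[where i = \<tau> and j = \<tau>]) (use assms in auto)
  also have "\<dots> = - sum f S"
    using assms(3) by (simp add: sum_negf)
  finally show ?thesis
    by simp
qed

lemma sum_anticomm_update:
  assumes "finite K" "k0 \<in> K"
  shows "(\<Sum>k\<in>K. anticomm ((s(k0 := s k0 + t)) k) (\<Delta> k)) = (\<Sum>k\<in>K. anticomm (s k) (\<Delta> k)) + anticomm t (\<Delta> k0)"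
proof -
  have "anticomm ((s(k0 := s k0 + t)) k) (\<Delta> k) = anticomm (s k) (\<Delta> k) + (if k = k0 then anticomm t (\<Delta> k) else 0)" for k
    by (cases "k = k0") (simp_all add: anticomm_add_left)
  then show ?thesis
    using assms by (simp only: sum.distrib sum.delta if_True)
qed

(* Flip the outcome of the last BSM, in the order ord, at which Delta is nonzero, by a Pauli
   anticommuting with Delta there.  Every correction that meets a nonzero Delta is fixed
   before that BSM, so exactly one summand of the exponent changes. *)
lemma sum_syndromes_sign_cancel:
  assumes ord: "bij_betw ord {1..N-1} {1..N-1}"
    and causal: "\<forall>k\<in>{1..N-1}. \<forall>s\<in>syndromes N. \<forall>s'\<in>syndromes N.
            (\<forall>j\<in>{1..<k}. s (ord j) = s' (ord j)) \<longrightarrow> P s (ord k) = P s' (ord k)"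
    and "\<exists>k\<in>{1..N-1}. \<Delta> k \<noteq> 0"
  shows "(\<Sum>s\<in>syndromes N. sign_of (\<Sum>k\<in>{1..N-1}. anticomm (P s k) (\<Delta> k) + anticomm (s k) (\<Delta> k))) = 0"
proof -
  define E where "E s = (\<Sum>k\<in>{1..N-1}. anticomm (P s k) (\<Delta> k) + anticomm (s k) (\<Delta> k))" for s
  define I where "I = {i\<in>{1..N-1}. \<Delta> (ord i) \<noteq> 0}"
  have "I \<noteq> {}"
  proof -
    obtain k where "k \<in> {1..N-1}" "\<Delta> k \<noteq> 0"
      using assms(3) by blast
    moreover obtain i where "i \<in> {1..N-1}" "ord i = k"
      using bij_betw_imp_surj_on[OF ord] \<open>k \<in> {1..N-1}\<close> by (metis imageE)
    ultimately show ?thesis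
      by (auto simp: I_def)
  qed
  moreover have "finite I"
    by (simp add: I_def)
  ultimately have m: "Max I \<in> I" and m_max: "\<And>i. i \<in> I \<Longrightarrow> i \<le> Max I"
    by simp_all
  then have "ord (Max I) \<in> {1..N-1}" "\<Delta> (ord (Max I)) \<noteq> 0"
    using bij_betwE[OF ord] by (auto simp: I_def)
  then obtain t where t: "anticomm t (\<Delta> (ord (Max I)))"
    using anticomm_witness by blast
  define \<tau> where "\<tau> s = s(ord (Max I) := s (ord (Max I)) + t)" for s :: "nat \<Rightarrow> bool \<times> bool"
  have \<tau>_syndromes: "\<tau> s \<in> syndromes N" if "s \<in> syndromes N" for s
    using that \<open>ord (Max I) \<in> {1..N-1}\<close> by (auto simp: \<tau>_def syndromes_def PiE_def extensional_def)
  have P_\<tau>: "P (\<tau> s) k = P s k" if s: "s \<in> syndromes N" and "k \<in> {1..N-1}" "\<Delta> k \<noteq> 0" for s k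
  proof -
    obtain i where i: "i \<in> {1..N-1}" "ord i = k"
      using bij_betw_imp_surj_on[OF ord] \<open>k \<in> {1..N-1}\<close> by (metis imageE)
    then have "i \<le> Max I"
      using m_max \<open>\<Delta> k \<noteq> 0\<close> by (simp add: I_def)
    moreover have "Max I \<in> {1..N-1}"
      using m by (simp add: I_def)
    ultimately have "P (\<tau> s) (ord i) = P s (ord i)"
      unfolding \<tau>_def
      by (intro causal_correction_update[OF ord causal i(1)] s \<tau>_syndromes[OF s, unfolded \<tau>_def])
    then show ?thesis
      using i(2) by simp
  qed
  have E_\<tau>: "E (\<tau> s) = E s + True" if s: "s \<in> syndromes N" for s
  proof -
    have "anticomm (P (\<tau> s) k) (\<Delta> k) = anticomm (P s k) (\<Delta> k)" if "k \<in> {1..N-1}" for k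
      using P_\<tau>[OF s that] by (cases "\<Delta> k = 0") auto
    then have corrections: "(\<Sum>k\<in>{1..N-1}. anticomm (P (\<tau> s) k) (\<Delta> k)) = (\<Sum>k\<in>{1..N-1}. anticomm (P s k) (\<Delta> k))"
      by (rule sum.cong[OF refl])
    have outcomes: "(\<Sum>k\<in>{1..N-1}. anticomm (\<tau> s k) (\<Delta> k)) = (\<Sum>k\<in>{1..N-1}. anticomm (s k) (\<Delta> k)) + True"
      using sum_anticomm_update[OF finite_atLeastAtMost \<open>ord (Max I) \<in> {1..N-1}\<close>] t
      unfolding \<tau>_def by simp
    show ?thesis
      by (simp only: E_def sum.distrib corrections outcomes add.assoc)
  qed
  have "(\<Sum>s\<in>syndromes N. sign_of (E s)) = 0"
  proof (rule sum_negating_involution[where \<tau> = \<tau>])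
    show "\<tau> (\<tau> s) = s" for s
      by (simp add: \<tau>_def)
  qed (simp_all add: \<tau>_syndromes E_\<tau> sign_of_add)
  then show ?thesis
    by (simp add: E_def)
qed

lemma labels_partial_sums_differ:
  assumes "\<alpha> \<in> labels N" "\<beta> \<in> labels N" "\<alpha> \<noteq> \<beta>" "(\<Sum>k\<in>{1..N}. \<alpha> k) = (\<Sum>k\<in>{1..N}. \<beta> k)"
  shows "\<exists>k\<in>{1..N-1}. (\<Sum>i\<in>{1..k}. \<alpha> i + \<beta> i) \<noteq> 0"
proof (rule ccontr)
  define \<Delta> where "\<Delta> k = (\<Sum>i\<in>{1..k}. \<alpha> i + \<beta> i)" for k
  assume "\<not> ?thesis"
  then have "\<Delta> k = 0" if "k \<in> {1..N-1}" for k
    using that by (simp add: \<Delta>_def)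
  moreover have "\<Delta> 0 = 0" "\<Delta> N = 0"
    using assms(4) by (simp_all add: \<Delta>_def sum.distrib)
  ultimately have \<Delta>_0: "\<Delta> k = 0" if "k \<le> N" for k
    using that by (cases "k = 0 \<or> k = N") auto
  have "\<alpha> k = \<beta> k" if k: "k \<in> {1..N}" for k
  proof -
    obtain k' where "k = Suc k'"
      using k by (cases k) auto
    then have "\<Delta> k = \<Delta> (k-1) + (\<alpha> k + \<beta> k)"
      by (simp add: \<Delta>_def)
    moreover have "\<Delta> k = 0" "\<Delta> (k-1) = 0"
      using k \<Delta>_0 by auto
    ultimately have "\<alpha> k + \<beta> k = 0"
      by simp
    then show ?thesis
      by (simp add: add_label_eq_0_iff)
  qed
  then have "\<alpha> = \<beta>"
    by (rule PiE_ext[OF assms(1,2)[unfolded labels_def]])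
  then show False
    using assms(3) by simp
qed

lemma finite_syndromes [simp]: "finite (syndromes N)"
  by (simp add: syndromes_def finite_PiE)

lemma card_syndromes: "card (syndromes N) = 4 ^ (N-1)"
proof -
  have "card (UNIV :: (bool \<times> bool) set) = 4"
    by (simp add: UNIV_label)
  then show ?thesis
    by (simp add: syndromes_def card_PiE)
qed

lemma syndrome_average_sign_diag: "(1/4) ^ (N-1) * (\<Sum>s\<in>syndromes N. swap_sign N P s \<alpha> * swap_sign N P s \<alpha>) = 1"
  by (simp add: swap_sign_def card_syndromes power_mult_distrib[symmetric])

lemma syndrome_average_sign:
  assumes "N \<ge> 2" and "is_protocol N P" and "\<alpha> \<in> labels N" "\<beta> \<in> labels N"
    and "(\<Sum>k\<in>{1..N}. \<alpha> k) = (\<Sum>k\<in>{1..N}. \<beta> k)"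
  shows "(1/4) ^ (N-1) * (\<Sum>s\<in>syndromes N. swap_sign N P s \<alpha> * swap_sign N P s \<beta>) = (if \<alpha> = \<beta> then 1 else 0)"
proof (cases "\<alpha> = \<beta>")
  case True
  then show ?thesis
    using syndrome_average_sign_diag by simp
next
  case False
  obtain ord where ord: "bij_betw ord {1..N-1} {1..N-1}"
    and causal: "\<forall>k\<in>{1..N-1}. \<forall>s\<in>syndromes N. \<forall>s'\<in>syndromes N.
            (\<forall>j\<in>{1..<k}. s (ord j) = s' (ord j)) \<longrightarrow> P s (ord k) = P s' (ord k)"
    using assms(2) unfolding is_protocol_def by blast
  have "N \<ge> 1"
    using assms(1) by simp
  have "(\<Sum>s\<in>syndromes N. swap_sign N P s \<alpha> * swap_sign N P s \<beta>)
      = sign_of (neg (spinv (\<Prod>j\<leftarrow>[0..<2*N-1]. link_factor \<alpha> j) * (\<Prod>j\<leftarrow>[0..<2*N-1]. link_factor \<beta> j)))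
        * (\<Sum>s\<in>syndromes N. sign_of (\<Sum>k\<in>{1..N-1}. anticomm (P s k) (\<Sum>i\<in>{1..k}. \<alpha> i + \<beta> i)
                                   + anticomm (s k) (\<Sum>i\<in>{1..k}. \<alpha> i + \<beta> i)))"
    unfolding swap_sign_times[OF \<open>N \<ge> 1\<close> assms(5)] by (simp add: sum_distrib_left)
  also have "\<dots> = 0"
    using sum_syndromes_sign_cancel[OF ord causal] labels_partial_sums_differ[OF assms(3,4) False assms(5)]
    by simp
  finally show ?thesis
    using False by simp
qed

lemma Lambda_s_bell_input:
  assumes "N \<ge> 1"
  shows "Lambda_s N P s (chain_in N (\<lambda>_. bellproj 0)) u w
       = (1/4) ^ (N-1) * bell (residual_lbl N P s) u * bell (residual_lbl N P s) w"
proof -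
  define \<alpha>0 where "\<alpha>0 = (\<lambda>k\<in>{1..N}. 0 :: bool \<times> bool)"
  define F where "F \<alpha> \<beta> = (1/4) ^ (N-1) * (swap_sign N P s \<alpha> * swap_sign N P s \<beta>)
      * bell (residual_lbl N P s + (\<Sum>k\<in>{1..N}. \<alpha> k)) u * bell (residual_lbl N P s + (\<Sum>k\<in>{1..N}. \<beta> k)) w"
    for \<alpha> \<beta>
  have "\<alpha>0 \<in> labels N"
    by (simp add: labels_def \<alpha>0_def)
  have "Lambda_s N P s (chain_in N (\<lambda>_. bellproj 0)) u w
      = (\<Sum>\<alpha>\<in>labels N. \<Sum>\<beta>\<in>labels N. if \<beta> = \<alpha>0 then if \<alpha> = \<alpha>0 then F \<alpha> \<beta> else 0 else 0)"
    unfolding Lambda_s_chain_in[OF assms] F_def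
    by (intro sum.cong refl) (auto simp: link_coef_bell_input \<alpha>0_def)
  also have "\<dots> = F \<alpha>0 \<alpha>0"
    using \<open>\<alpha>0 \<in> labels N\<close> by (simp add: sum.delta)
  also have "\<dots> = (1/4) ^ (N-1) * bell (residual_lbl N P s) u * bell (residual_lbl N P s) w"
    by (simp add: F_def swap_sign_def \<alpha>0_def)
  finally show ?thesis .
qed

lemma bell_outer_eq_bellproj_zero:
  assumes "(\<lambda>u w. bell h u * bell h w) = bellproj 0"
  shows "h = 0"
proof -
  have "bell h (False, False) * bell h (False, False) = bell 0 (False, False) * cnj (bell 0 (False, False))"
    and "bell h (False, False) * bell h (True, True) = bell 0 (False, False) * cnj (bell 0 (True, True))"
    using assms unfolding bellproj_def by (metis)+
  then show ?thesis
    by (cases h) (auto simp: bell_def pauli_def sqrt2_square zero_prod_def zero_bool_def split: if_splits)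
qed

lemma residual_lbl_protocol:
  assumes "N \<ge> 1" and "is_protocol N P" and "s \<in> syndromes N"
  shows "residual_lbl N P s = 0"
proof -
  define h where "h = residual_lbl N P s"
  define out where "out = Lambda_s N P s (chain_in N (\<lambda>_. bellproj (False, False)))"
  have normalized: "(\<lambda>u w. out u w / tr2 out) = bellproj (False, False)"
    using assms(2,3) unfolding is_protocol_def out_def Let_def by blast
  have out: "out u w = (1/4) ^ (N-1) * bell h u * bell h w" for u w
    unfolding out_def h_def zero_label by (rule Lambda_s_bell_input[OF assms(1)])
  have "tr2 out = (1/4) ^ (N-1)"
    using bell_orthonormal[of h h] by (simp add: tr2_def out sum_distrib_left[symmetric] mult.assoc)
  then have "(\<lambda>u w. bell h u * bell h w) = bellproj 0"
    using normalized by (simp add: out zero_label)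
  then show ?thesis
    unfolding h_def by (rule bell_outer_eq_bellproj_zero)
qed

lemma residual_lbl_seq_prot:
  assumes "N \<ge> 1"
  shows "residual_lbl N (seq_prot N) s = 0"
proof -
  have "(\<Sum>k\<in>{1..N}. seq_prot N s k) = (\<Sum>k\<in>{1..N-1}. seq_prot N s (Suc k))"
    using assms sum.shift_bounds_cl_Suc_ivl[of "seq_prot N s" 0 "N-1"]
    by (simp add: seq_prot_def zero_label sum.atLeast_Suc_atMost)
  also have "\<dots> = (\<Sum>k\<in>{1..N-1}. s k)"
    by (rule sum.cong) (auto simp: seq_prot_def)
  finally show ?thesis
    by (simp add: residual_lbl_def seq_prot_def zero_label)
qed

section \<open>The twirl\<close>

lemma twirl_bell_outer:
  "twirl (\<lambda>u' w'. bell a u' * bell b w') u w = (if a = b then bell a u * bell a w else 0)"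
  unfolding twirl_def mult2_def adj2_def kron1_def sum_UNIV_label
  by (cases a; cases b; cases u; cases w) (simp_all add: pI_def pX_def pY_def pZ_def bell_def pauli_def)

lemma twirl_add: "twirl (\<lambda>u w. f u w + g u w) u w = twirl f u w + twirl g u w"
  unfolding twirl_def mult2_def adj2_def by (simp add: distrib_left distrib_right sum.distrib)

lemma twirl_scale: "twirl (\<lambda>u w. c * f u w) u w = c * twirl f u w"
  unfolding twirl_def mult2_def adj2_def by (simp add: sum_distrib_left distrib_left mult_ac)

lemma twirl_sum:
  assumes "finite I"
  shows "twirl (\<lambda>u w. \<Sum>i\<in>I. f i u w) u w = (\<Sum>i\<in>I. twirl (f i) u w)"
  using assms
proof (induction I arbitrary: u w rule: finite_induct)
  case empty
  then show ?case
    by (simp add: twirl_def mult2_def adj2_def)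
next
  case (insert i I)
  then show ?case
    using twirl_add[of "f i" "\<lambda>u w. \<Sum>i\<in>I. f i u w"] by simp
qed

lemma twirl_scaled_bell_outer:
  "twirl (\<lambda>u w. c * bell a u * bell b w) u w = (if a = b then c * bell a u * bell a w else 0)"
  using twirl_scale[of c "\<lambda>u w. bell a u * bell b w"] twirl_bell_outer by (simp add: mult.assoc)

lemma twirl_eq_bell_diagonal: "twirl \<rho> u w = (\<Sum>a\<in>UNIV. bell_coef \<rho> a a * bell a u * bell a w)"
proof -
  have "\<rho> = (\<lambda>u w. \<Sum>a\<in>UNIV. \<Sum>b\<in>UNIV. bell_coef \<rho> a b * bell a u * bell b w)"
    using bell_expansion[of \<rho>] by (simp add: fun_eq_iff)
  then have "twirl \<rho> u w = twirl (\<lambda>u w. \<Sum>a\<in>UNIV. \<Sum>b\<in>UNIV. bell_coef \<rho> a b * bell a u * bell b w) u w"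
    by (rule arg_cong[where f = "\<lambda>r. twirl r u w"])
  also have "\<dots> = (\<Sum>a\<in>UNIV. \<Sum>b\<in>UNIV. twirl (\<lambda>u w. bell_coef \<rho> a b * bell a u * bell b w) u w)"
    by (simp add: twirl_sum)
  also have "\<dots> = (\<Sum>a\<in>UNIV. bell_coef \<rho> a a * bell a u * bell a w)"
    by (simp add: twirl_scaled_bell_outer sum.delta)
  finally show ?thesis .
qed

lemma bell_coef_twirl: "bell_coef (twirl \<rho>) a b = (if a = b then bell_coef \<rho> a a else 0)"
proof -
  have "bell_coef (twirl \<rho>) a b
      = (\<Sum>p\<in>UNIV. \<Sum>q\<in>UNIV. \<Sum>c\<in>UNIV. bell_coef \<rho> c c * (bell a p * bell c p) * (bell c q * bell b q))"
    unfolding bell_coef_def[of "twirl \<rho>"] twirl_eq_bell_diagonal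
    by (simp add: sum_distrib_left sum_distrib_right mult_ac)
  also have "\<dots> = (\<Sum>c\<in>UNIV. bell_coef \<rho> c c * (\<Sum>p\<in>UNIV. bell a p * bell c p) * (\<Sum>q\<in>UNIV. bell c q * bell b q))"
    by (subst sum_rotate3) (simp add: sum_distrib_left sum_distrib_right mult_ac)
  also have "\<dots> = (if a = b then bell_coef \<rho> a a else 0)"
  proof -
    have indicator: "x * (if c then 1 else 0) = (if c then x else 0)" for x :: complex and c
      by simp
    show ?thesis
      by (simp add: bell_orthonormal mult.commute[of "bell _ _" "bell b _"] indicator sum.delta')
  qed
  finally show ?thesis .
qed

lemma link_coef_twirl:
  assumes "\<alpha> \<in> labels N" "\<beta> \<in> labels N"
  shows "link_coef N (\<lambda>k. twirl (\<rho> k)) \<alpha> \<beta> = (if \<alpha> = \<beta> then link_coef N \<rho> \<alpha> \<alpha> else 0)"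
proof (cases "\<alpha> = \<beta>")
  case False
  then obtain k where "k \<in> {1..N}" "\<alpha> k \<noteq> \<beta> k"
    using assms PiE_ext unfolding labels_def by metis
  then show ?thesis
    using False by (auto simp: link_coef_def bell_coef_twirl prod_zero_iff)
qed (simp add: link_coef_def bell_coef_twirl)

definition twirled_output :: "nat \<Rightarrow> (nat \<Rightarrow> qop2) \<Rightarrow> qop2" where
  "twirled_output N \<rho> u w
     = (\<Sum>\<alpha>\<in>labels N. link_coef N \<rho> \<alpha> \<alpha> * bell (\<Sum>k\<in>{1..N}. \<alpha> k) u * bell (\<Sum>k\<in>{1..N}. \<alpha> k) w)"

lemma Lambda_chain_in:
  assumes "N \<ge> 1" and "\<forall>s\<in>syndromes N. residual_lbl N P s = 0"
  shows "Lambda N P (chain_in N \<rho>) u w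
       = (\<Sum>\<alpha>\<in>labels N. \<Sum>\<beta>\<in>labels N. link_coef N \<rho> \<alpha> \<beta>
            * ((1/4) ^ (N-1) * (\<Sum>s\<in>syndromes N. swap_sign N P s \<alpha> * swap_sign N P s \<beta>))
            * bell (\<Sum>k\<in>{1..N}. \<alpha> k) u * bell (\<Sum>k\<in>{1..N}. \<beta> k) w)"
proof -
  have "Lambda N P (chain_in N \<rho>) u w
      = (\<Sum>s\<in>syndromes N. \<Sum>\<alpha>\<in>labels N. \<Sum>\<beta>\<in>labels N. (1/4) ^ (N-1) * link_coef N \<rho> \<alpha> \<beta>
            * (swap_sign N P s \<alpha> * swap_sign N P s \<beta>) * bell (\<Sum>k\<in>{1..N}. \<alpha> k) u * bell (\<Sum>k\<in>{1..N}. \<beta> k) w)"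
    unfolding Lambda_def using assms(2) by (intro sum.cong refl) (simp add: Lambda_s_chain_in[OF assms(1)])
  then show ?thesis
    by (simp add: sum_rotate3[of _ "syndromes N"] sum_distrib_left sum_distrib_right mult_ac)
qed

lemma Lambda_twirled_links:
  assumes "N \<ge> 1" and "\<forall>s\<in>syndromes N. residual_lbl N P s = 0"
  shows "Lambda N P (chain_in N (\<lambda>k. twirl (\<rho> k))) = twirled_output N \<rho>"
proof (intro ext)
  fix u w
  have "Lambda N P (chain_in N (\<lambda>k. twirl (\<rho> k))) u w
      = (\<Sum>\<alpha>\<in>labels N. \<Sum>\<beta>\<in>labels N.
           if \<beta> = \<alpha> then link_coef N \<rho> \<alpha> \<alpha> * bell (\<Sum>k\<in>{1..N}. \<alpha> k) u * bell (\<Sum>k\<in>{1..N}. \<alpha> k) w else 0)"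
    unfolding Lambda_chain_in[OF assms]
    using syndrome_average_sign_diag[of N P] by (intro sum.cong refl) (auto simp: link_coef_twirl)
  also have "\<dots> = twirled_output N \<rho> u w"
    unfolding twirled_output_def by (intro sum.cong refl) (simp add: sum.delta)
  finally show "Lambda N P (chain_in N (\<lambda>k. twirl (\<rho> k))) u w = twirled_output N \<rho> u w" .
qed

lemma twirl_Lambda:
  assumes "N \<ge> 2" and "is_protocol N P"
  shows "twirl (Lambda N P (chain_in N \<rho>)) = twirled_output N \<rho>"
proof (intro ext)
  fix u w
  have "N \<ge> 1"
    using assms(1) by simp
  define c where "c \<alpha> \<beta> = link_coef N \<rho> \<alpha> \<beta>
      * ((1/4) ^ (N-1) * (\<Sum>s\<in>syndromes N. swap_sign N P s \<alpha> * swap_sign N P s \<beta>))" for \<alpha> \<beta>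
  have "Lambda N P (chain_in N \<rho>)
      = (\<lambda>u w. \<Sum>\<alpha>\<in>labels N. \<Sum>\<beta>\<in>labels N. c \<alpha> \<beta> * bell (\<Sum>k\<in>{1..N}. \<alpha> k) u * bell (\<Sum>k\<in>{1..N}. \<beta> k) w)"
    using Lambda_chain_in[OF \<open>N \<ge> 1\<close>] residual_lbl_protocol[OF \<open>N \<ge> 1\<close> assms(2)]
    by (simp add: fun_eq_iff c_def)
  then have "twirl (Lambda N P (chain_in N \<rho>)) u w
      = (\<Sum>\<alpha>\<in>labels N. \<Sum>\<beta>\<in>labels N. twirl (\<lambda>u w. c \<alpha> \<beta> * bell (\<Sum>k\<in>{1..N}. \<alpha> k) u * bell (\<Sum>k\<in>{1..N}. \<beta> k) w) u w)"
    by (simp add: twirl_sum)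
  also have "\<dots> = (\<Sum>\<alpha>\<in>labels N. \<Sum>\<beta>\<in>labels N.
      if \<beta> = \<alpha> then link_coef N \<rho> \<alpha> \<alpha> * bell (\<Sum>k\<in>{1..N}. \<alpha> k) u * bell (\<Sum>k\<in>{1..N}. \<alpha> k) w else 0)"
  proof (intro sum.cong refl)
    fix \<alpha> \<beta>
    assume labels: "\<alpha> \<in> labels N" "\<beta> \<in> labels N"
    show "twirl (\<lambda>u w. c \<alpha> \<beta> * bell (\<Sum>k\<in>{1..N}. \<alpha> k) u * bell (\<Sum>k\<in>{1..N}. \<beta> k) w) u w
        = (if \<beta> = \<alpha> then link_coef N \<rho> \<alpha> \<alpha> * bell (\<Sum>k\<in>{1..N}. \<alpha> k) u * bell (\<Sum>k\<in>{1..N}. \<alpha> k) w else 0)"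
    proof (cases "(\<Sum>k\<in>{1..N}. \<alpha> k) = (\<Sum>k\<in>{1..N}. \<beta> k)")
      case True
      have "c \<alpha> \<beta> = (if \<alpha> = \<beta> then link_coef N \<rho> \<alpha> \<alpha> else 0)"
        unfolding c_def syndrome_average_sign[OF assms labels True] by simp
      moreover have "twirl (\<lambda>u w. c \<alpha> \<beta> * bell (\<Sum>k\<in>{1..N}. \<alpha> k) u * bell (\<Sum>k\<in>{1..N}. \<beta> k) w) u w
          = c \<alpha> \<beta> * bell (\<Sum>k\<in>{1..N}. \<alpha> k) u * bell (\<Sum>k\<in>{1..N}. \<alpha> k) w"
        using True by (simp add: twirl_scaled_bell_outer)
      ultimately show ?thesis
        by (cases "\<alpha> = \<beta>") simp_all
    next
      case False
      then show ?thesis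
        by (auto simp: twirl_scaled_bell_outer)
    qed
  qed
  also have "\<dots> = twirled_output N \<rho> u w"
    unfolding twirled_output_def by (intro sum.cong refl) (simp add: sum.delta)
  finally show "twirl (Lambda N P (chain_in N \<rho>)) u w = twirled_output N \<rho> u w" .
qed

theorem theorem1:
  fixes N :: nat and \<rho> :: "nat \<Rightarrow> qop2" and P :: protocol
  assumes "N \<ge> 2"
    and "\<forall>k\<in>{1..N}. density2 (\<rho> k)"
    and "is_protocol N P"
  shows "twirl (Lambda N P (chain_in N \<rho>)) = Lambda N P (chain_in N (\<lambda>k. twirl (\<rho> k)))
       \<and> Lambda N P (chain_in N (\<lambda>k. twirl (\<rho> k)))
           = Lambda N (seq_prot N) (chain_in N (\<lambda>k. twirl (\<rho> k)))"
proof -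
  have "N \<ge> 1"
    using assms(1) by simp
  have "twirl (Lambda N P (chain_in N \<rho>)) = twirled_output N \<rho>"
    using twirl_Lambda[OF assms(1,3)] .
  moreover have "Lambda N P (chain_in N (\<lambda>k. twirl (\<rho> k))) = twirled_output N \<rho>"
    using Lambda_twirled_links[OF \<open>N \<ge> 1\<close>] residual_lbl_protocol[OF \<open>N \<ge> 1\<close> assms(3)] by blast
  moreover have "Lambda N (seq_prot N) (chain_in N (\<lambda>k. twirl (\<rho> k))) = twirled_output N \<rho>"
    using Lambda_twirled_links[OF \<open>N \<ge> 1\<close>] residual_lbl_seq_prot[OF \<open>N \<ge> 1\<close>] by blast
  ultimately show ?thesis
    by simp
qed

end
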